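(* Let $1\le r\le s\le t$ and let $u=ABCd$, $v=A'B'C'd'$ be vertices of $E3C(r,s,t)$ with $A=A'$, $B=B'$, $C\ne C'$ and $d\ne d'$. Then there exist $2r+2$ pairwise internally disjoint $u$–$v$ paths in $E3C(r,s,t)$, each of length at most $t+6$ if $\{d,d'\}=\{0,1\}$ or $\{d,d'\}=\{0,2\}$, and each of length at most $t+8$ if $\{d,d'\}=\{1,2\}$.
   Context: The exchanged 3-ary $n$-cube $E3C(r,s,t)$ ($r,s,t\ge1$, $n=r+s+t+1$): vertices are strings written $x=ABCd$ with $A\in\{0,1,2\}^r$, $B\in\{0,1,2\}^s$, $C\in\{0,1,2\}^t$, $d\in\{0,1,2\}$. Two distinct vertices $x=ABCd$, $y=A'B'C'd'$ are adjacent iff one of: (E0) $A=A',B=B',C=C'$ and $d\ne d'$; (E1) $d=d'=0$, $A=A'$, $B=B'$ and $C,C'$ differ in exactly one position; (E2) $d=d'=1$, $A=A'$, $C=C'$ and $B,B'$ differ in exactly one position; (E3) $d=d'=2$, $B=B'$, $C=C'$ and $A,A'$ differ in exactly one position. Paths are internally disjoint if they share no vertices other than their endpoints; length = number of edges. *)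

theory Defs
  imports Main
begin

type_synonym e3vert = "nat list \<times> nat list \<times> nat list \<times> nat"

definition tern_str :: "nat \<Rightarrow> nat list \<Rightarrow> bool" where
  "tern_str k X \<longleftrightarrow> length X = k \<and> (\<forall>a\<in>set X. a < 3)"

definition e3c_vert :: "nat \<Rightarrow> nat \<Rightarrow> nat \<Rightarrow> e3vert \<Rightarrow> bool" where
  "e3c_vert r s t x = (case x of (A,B,C,d) \<Rightarrow>
     tern_str r A \<and> tern_str s B \<and> tern_str t C \<and> d < 3)"

definition differ_one :: "nat list \<Rightarrow> nat list \<Rightarrow> bool" where
  "differ_one X Y \<longleftrightarrow> length X = length Y \<and>
     card {i. i < length X \<and> X ! i \<noteq> Y ! i} = 1"

definition e3c_adj :: "nat \<Rightarrow> nat \<Rightarrow> nat \<Rightarrow> e3vert \<Rightarrow> e3vert \<Rightarrow> bool" where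
  "e3c_adj r s t x y = (e3c_vert r s t x \<and> e3c_vert r s t y \<and> x \<noteq> y \<and>
     (case x of (A,B,C,d) \<Rightarrow> case y of (A',B',C',d') \<Rightarrow>
        (A = A' \<and> B = B' \<and> C = C' \<and> d \<noteq> d')
      \<or> (d = 0 \<and> d' = 0 \<and> A = A' \<and> B = B' \<and> differ_one C C')
      \<or> (d = 1 \<and> d' = 1 \<and> A = A' \<and> C = C' \<and> differ_one B B')
      \<or> (d = 2 \<and> d' = 2 \<and> B = B' \<and> C = C' \<and> differ_one A A')))"

definition e3c_path :: "nat \<Rightarrow> nat \<Rightarrow> nat \<Rightarrow> e3vert \<Rightarrow> e3vert \<Rightarrow> e3vert list \<Rightarrow> bool" where
  "e3c_path r s t u v p \<longleftrightarrow> p \<noteq> [] \<and> hd p = u \<and> last p = v \<and> distinct p \<and>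
     (\<forall>x\<in>set p. e3c_vert r s t x) \<and>
     (\<forall>i. Suc i < length p \<longrightarrow> e3c_adj r s t (p ! i) (p ! Suc i))"

definition path_len :: "'a list \<Rightarrow> nat" where
  "path_len p = length p - 1"

definition internally_disjoint :: "e3vert \<Rightarrow> e3vert \<Rightarrow> e3vert list list \<Rightarrow> bool" where
  "internally_disjoint u v ps \<longleftrightarrow> distinct ps \<and>
     (\<forall>i<length ps. \<forall>j<length ps. i \<noteq> j \<longrightarrow> set (ps ! i) \<inter> set (ps ! j) \<subseteq> {u, v})"

end

theory Submission
  imports Defs
begin

text \<open>
  In layer 0 every column (X, Y) carries a copy of the walk from C to C' that corrects their
  differing positions one at a time; it has at most t edges. Each of the 2r + 2 paths runs along
  one such copy, reached from u and left towards v by a few edges in the layers 1 and 2, in a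
  column of its own: for the case {0, 2} these are the column (A, B) itself, a column (A, B')
  with B' a neighbour of B, and the columns (A', B) for the 2r neighbours A' of A; the path for
  A' = shift A k first moves to shift C k, which avoids the walk, except for the at most one k
  for which shift C k lies on it. For the case {1, 2} the last 2r paths use the columns
  (A, shift B k) and return to v through shift A k. Every internal vertex determines the path
  it lies on, which certifies disjointness. The case {0, 1} is the case {0, 2} in E3C(s, r, t),
  which is isomorphic to E3C(r, s, t) by exchanging A with B and layer 1 with layer 2, and the
  remaining cases follow by reversing the paths.
\<close>

section \<open>Walks between ternary strings\<close>

fun coord_walk :: "nat list \<Rightarrow> nat list \<Rightarrow> nat list list" where
  "coord_walk (x # xs) (y # ys) =
     map ((#) x) (coord_walk xs ys) @ (if x = y then [] else [y # ys])"
| "coord_walk xs ys = [xs]"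

lemma coord_walk_not_Nil [simp]: "coord_walk xs ys \<noteq> []"
  by (induction xs ys rule: coord_walk.induct) auto

lemma hd_coord_walk [simp]: "length xs = length ys \<Longrightarrow> hd (coord_walk xs ys) = xs"
  by (induction xs ys rule: list_induct2) (auto simp: hd_append hd_map)

lemma last_coord_walk [simp]: "length xs = length ys \<Longrightarrow> last (coord_walk xs ys) = ys"
  by (induction xs ys rule: list_induct2) (auto simp: last_map)

lemma length_coord_walk: "length (coord_walk xs ys) \<le> length xs + 1"
  by (induction xs ys rule: coord_walk.induct) auto

lemma distinct_coord_walk: "distinct (coord_walk xs ys)"
  by (induction xs ys rule: coord_walk.induct) (auto simp: distinct_map)

lemma in_set_coord_walk:
  "length xs = length ys \<Longrightarrow> Z \<in> set (coord_walk xs ys) \<Longrightarrow>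
    \<exists>k\<le>length xs. Z = take k xs @ drop k ys"
proof (induction xs ys arbitrary: Z rule: list_induct2)
  case (Cons x xs y ys)
  consider "Z = y # ys" | Z' where "Z = x # Z'" "Z' \<in> set (coord_walk xs ys)"
    using Cons.prems by (auto split: if_splits)
  then show ?case
  proof cases
    case 1
    then show ?thesis by (intro exI[of _ 0]) auto
  next
    case (2 Z')
    with Cons.IH obtain k where "k \<le> length xs" "Z' = take k xs @ drop k ys" by blast
    with 2 show ?thesis by (intro exI[of _ "Suc k"]) auto
  qed
qed simp

lemma differ_one_commute: "differ_one X Y \<longleftrightarrow> differ_one Y X"
proof -
  have "differ_one Y X" if "differ_one X Y" for X Y :: "nat list"
  proof -
    from that have "length Y = length X" "card {i. i < length X \<and> X ! i \<noteq> Y ! i} = 1"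
      by (auto simp: differ_one_def)
    moreover have "{i. i < length Y \<and> Y ! i \<noteq> X ! i} = {i. i < length X \<and> X ! i \<noteq> Y ! i}"
      using \<open>length Y = length X\<close> by auto
    ultimately show ?thesis
      by (simp add: differ_one_def)
  qed
  then show ?thesis
    by blast
qed

lemma differ_one_imp_neq: "differ_one X Y \<Longrightarrow> X \<noteq> Y"
  unfolding differ_one_def by auto

lemma differ_one_list_update: "i < length X \<Longrightarrow> c \<noteq> X ! i \<Longrightarrow> differ_one X (X[i := c])"
proof -
  assume "i < length X" "c \<noteq> X ! i"
  then have "{j. j < length X \<and> X ! j \<noteq> X[i := c] ! j} = {i}"
    by (auto simp: nth_list_update)
  then show ?thesis
    unfolding differ_one_def by simp
qed

lemma differ_one_Cons: "differ_one xs ys \<Longrightarrow> differ_one (x # xs) (x # ys)"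
proof -
  assume "differ_one xs ys"
  have "{j. j < Suc (length xs) \<and> (x # xs) ! j \<noteq> (x # ys) ! j}
      = Suc ` {j. j < length xs \<and> xs ! j \<noteq> ys ! j}"
  proof (rule set_eqI)
    fix j
    show "j \<in> {j. j < Suc (length xs) \<and> (x # xs) ! j \<noteq> (x # ys) ! j} \<longleftrightarrow>
        j \<in> Suc ` {j. j < length xs \<and> xs ! j \<noteq> ys ! j}"
      by (cases j) auto
  qed
  then have "card {j. j < Suc (length xs) \<and> (x # xs) ! j \<noteq> (x # ys) ! j}
      = card {j. j < length xs \<and> xs ! j \<noteq> ys ! j}"
    by (simp add: card_image)
  with \<open>differ_one xs ys\<close> show ?thesis
    unfolding differ_one_def by auto
qed

lemma successively_differ_one_coord_walk:
  "length xs = length ys \<Longrightarrow> successively differ_one (coord_walk xs ys)"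
proof (induction xs ys rule: list_induct2)
  case (Cons x xs y ys)
  have "successively differ_one (map ((#) x) (coord_walk xs ys))"
    using Cons.IH by (auto simp: successively_map intro: successively_mono differ_one_Cons)
  moreover have "x \<noteq> y \<Longrightarrow> differ_one (x # ys) (y # ys)"
    using differ_one_list_update[of 0 "x # ys" y] by simp
  ultimately show ?case
    using Cons.hyps by (auto simp: successively_append_iff last_map)
qed simp

lemma tern_str_coord_walk:
  assumes "tern_str n X" "tern_str n Y" "Z \<in> set (coord_walk X Y)"
  shows "tern_str n Z"
proof -
  obtain k where "Z = take k X @ drop k Y"
    using in_set_coord_walk[of X Y Z] assms by (auto simp: tern_str_def)
  then show ?thesis
    using assms(1,2) by (auto simp: tern_str_def dest: in_set_takeD in_set_dropD)
qed

lemma list_update_in_coord_walk: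
  assumes "length X = length Y" "i < length X" "c \<noteq> X ! i" "X[i := c] \<in> set (coord_walk X Y)"
  shows "Y ! i = c" and "\<And>j. i < j \<Longrightarrow> j < length X \<Longrightarrow> X ! j = Y ! j"
proof -
  obtain k where "k \<le> length X" and upd: "X[i := c] = take k X @ drop k Y"
    using assms(1,4) in_set_coord_walk by blast
  have nth_upd: "X[i := c] ! j = (if j < k then X ! j else Y ! j)" if "j < length X" for j
    using that assms(1) \<open>k \<le> length X\<close> by (simp add: upd nth_append)
  have "k \<le> i"
    using nth_upd[of i] assms(2,3) by (auto split: if_splits)
  show "Y ! i = c"
    using nth_upd[of i] assms(2) \<open>k \<le> i\<close> by simp
  show "X ! j = Y ! j" if "i < j" "j < length X" for j
    using nth_upd[of j] that \<open>k \<le> i\<close> by simp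
qed

text \<open>The walk corrects the positions where X and Y differ one at a time, from the last to the
  first, so it meets at most one single-position change of X.\<close>
lemma list_update_in_coord_walk_unique:
  assumes "length X = length Y"
    and "i < length X" "c \<noteq> X ! i" "X[i := c] \<in> set (coord_walk X Y)"
    and "i' < length X" "c' \<noteq> X ! i'" "X[i' := c'] \<in> set (coord_walk X Y)"
  shows "i = i' \<and> c = c'"
proof -
  note walk = list_update_in_coord_walk[OF assms(1)]
  have "\<not> i < i'" and "\<not> i' < i"
    using walk(1)[OF assms(5-7)] walk(2)[OF assms(2-4)] walk(1)[OF assms(2-4)] walk(2)[OF assms(5-7)]
      assms(2,3,5,6) by auto
  then show ?thesis
    using walk(1)[OF assms(2-4)] walk(1)[OF assms(5-7)] by simp
qed

section \<open>Single-position shifts\<close>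

definition shift :: "nat list \<Rightarrow> nat \<times> nat \<Rightarrow> nat list" where
  "shift X k = X[fst k := (X ! fst k + snd k) mod 3]"

definition shift_indices :: "nat \<Rightarrow> (nat \<times> nat) list" where
  "shift_indices m = [(i, e). i \<leftarrow> [0..<m], e \<leftarrow> [1, 2]]"

definition shift_index :: "nat list \<Rightarrow> nat list \<Rightarrow> nat \<times> nat" where
  "shift_index X Y = (let i = LEAST i. X ! i \<noteq> Y ! i in (i, (Y ! i + 3 - X ! i) mod 3))"

lemma shift_Pair: "shift X (i, e) = X[i := (X ! i + e) mod 3]"
  unfolding shift_def by simp

lemma mem_shift_indices [simp]: "(i, e) \<in> set (shift_indices m) \<longleftrightarrow> i < m \<and> (e = 1 \<or> e = 2)"
  unfolding shift_indices_def by auto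

lemma distinct_shift_indices: "distinct (shift_indices m)"
  unfolding shift_indices_def by (induction m) auto

lemma length_shift_indices [simp]: "length (shift_indices m) = 2 * m"
  unfolding shift_indices_def by (induction m) auto

lemma shift_indices_mono: "m \<le> n \<Longrightarrow> k \<in> set (shift_indices m) \<Longrightarrow> k \<in> set (shift_indices n)"
  by (cases k) auto

lemma length_shift [simp]: "length (shift X k) = length X"
  unfolding shift_def by simp

lemma tern_str_shift: "tern_str n X \<Longrightarrow> tern_str n (shift X k)"
  unfolding tern_str_def shift_def using set_update_subset_insert by fastforce

lemma nth_shift:
  assumes "tern_str n X" "(i, e) \<in> set (shift_indices n)"
  shows "shift X (i, e) ! i = (X ! i + e) mod 3" and "(X ! i + e) mod 3 \<noteq> X ! i"
proof -
  have "X ! i < 3" "i < length X" "e = 1 \<or> e = 2"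
    using assms by (auto simp: tern_str_def)
  then show "shift X (i, e) ! i = (X ! i + e) mod 3" "(X ! i + e) mod 3 \<noteq> X ! i"
    by (simp add: shift_def, presburger)
qed

lemma differ_one_shift:
  "tern_str n X \<Longrightarrow> k \<in> set (shift_indices n) \<Longrightarrow> differ_one X (shift X k)"
  using nth_shift(2)[of n X] differ_one_list_update
  by (cases k) (auto simp: shift_def tern_str_def)

lemma shift_index_shift:
  assumes "tern_str n X" "k \<in> set (shift_indices n)"
  shows "shift_index X (shift X k) = k"
proof (cases k)
  case (Pair i e)
  have neq: "X ! j \<noteq> shift X k ! j \<longleftrightarrow> j = i" for j
    using nth_shift[of n X i e] assms Pair by (cases "j = i") (auto simp: shift_def)
  have least: "(LEAST j. X ! j \<noteq> shift X k ! j) = i"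
    using neq by (intro Least_equality) auto
  have "X ! i < 3" "e \<in> {1, 2}"
    using assms Pair by (auto simp: tern_str_def)
  then have "X ! i \<in> {0, 1, 2}" "e \<in> {1, 2}"
    by auto
  then have "((X ! i + e) mod 3 + 3 - X ! i) mod 3 = e"
    by auto
  then show ?thesis
    using least nth_shift(1)[of n X i e] assms Pair by (simp add: shift_index_def)
qed

lemma coord_walk_contains_at_most_one_shift:
  assumes "tern_str n C" "length C' = n"
  obtains k0 where "\<And>k. k \<in> set (shift_indices n) \<Longrightarrow> shift C k \<in> set (coord_walk C C') \<Longrightarrow> k = k0"
proof -
  have "k = k'"
    if "k \<in> set (shift_indices n)" "shift C k \<in> set (coord_walk C C')"
      and "k' \<in> set (shift_indices n)" "shift C k' \<in> set (coord_walk C C')" for k k'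
  proof -
    obtain i e i' e' where k: "k = (i, e)" "k' = (i', e')"
      by (cases k, cases k')
    have len: "length C = length C'" "i < length C" "i' < length C"
      using assms that k by (auto simp: tern_str_def)
    have "i = i' \<and> (C ! i + e) mod 3 = (C ! i' + e') mod 3"
      using list_update_in_coord_walk_unique[OF len(1,2) nth_shift(2)[OF assms(1) that(1)[unfolded k]]
          _ len(3) nth_shift(2)[OF assms(1) that(3)[unfolded k]]] that(2,4)
      unfolding k shift_Pair by blast
    then have "shift C k = shift C k'"
      unfolding k shift_Pair by auto
    then show ?thesis
      using shift_index_shift[OF assms(1) that(1)] shift_index_shift[OF assms(1) that(3)] by metis
  qed
  then show ?thesis
    using that by blast
qed

lemma shift_facts:
  assumes "tern_str n X" "k \<in> set (shift_indices n)"
  shows "tern_str n (shift X k)" "differ_one X (shift X k)" "differ_one (shift X k) X"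
    and "shift X k \<noteq> X" "X \<noteq> shift X k" "shift_index X (shift X k) = k"
  using tern_str_shift[OF assms(1)] differ_one_shift[OF assms] shift_index_shift[OF assms]
  by (auto simp: differ_one_commute dest: differ_one_imp_neq)

section \<open>Paths in E3C(r, s, t)\<close>

lemma e3c_vert_iff [simp]:
  "e3c_vert r s t (A, B, C, d) \<longleftrightarrow> tern_str r A \<and> tern_str s B \<and> tern_str t C \<and> d < 3"
  unfolding e3c_vert_def by simp

lemma e3c_adj_layer_iff [simp]:
  "e3c_adj r s t (X, Y, Z, d) (X, Y, Z, d') \<longleftrightarrow> e3c_vert r s t (X, Y, Z, d) \<and> d' < 3 \<and> d \<noteq> d'"
  unfolding e3c_adj_def by auto

lemma e3c_adj_C_iff [simp]:
  "e3c_adj r s t (X, Y, Z, d) (X, Y, Z', d) \<longleftrightarrow>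
     d = 0 \<and> e3c_vert r s t (X, Y, Z, d) \<and> tern_str t Z' \<and> differ_one Z Z'"
  unfolding e3c_adj_def by (auto dest: differ_one_imp_neq)

lemma e3c_adj_B_iff [simp]:
  "e3c_adj r s t (X, Y, Z, d) (X, Y', Z, d) \<longleftrightarrow>
     d = 1 \<and> e3c_vert r s t (X, Y, Z, d) \<and> tern_str s Y' \<and> differ_one Y Y'"
  unfolding e3c_adj_def by (auto dest: differ_one_imp_neq)

lemma e3c_adj_A_iff [simp]:
  "e3c_adj r s t (X, Y, Z, d) (X', Y, Z, d) \<longleftrightarrow>
     d = 2 \<and> e3c_vert r s t (X, Y, Z, d) \<and> tern_str r X' \<and> differ_one X X'"
  unfolding e3c_adj_def by (auto dest: differ_one_imp_neq)

lemma e3c_adj_commute: "e3c_adj r s t x y \<longleftrightarrow> e3c_adj r s t y x"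
  unfolding e3c_adj_def by (auto split: prod.splits simp: differ_one_commute)

lemma e3c_path_iff:
  "e3c_path r s t u v p \<longleftrightarrow> p \<noteq> [] \<and> hd p = u \<and> last p = v \<and> distinct p \<and>
     (\<forall>x\<in>set p. e3c_vert r s t x) \<and> successively (e3c_adj r s t) p"
  unfolding e3c_path_def successively_conv_nth by blast

definition layer0_walk :: "nat list \<Rightarrow> nat list \<Rightarrow> nat list \<Rightarrow> nat list \<Rightarrow> e3vert list" where
  "layer0_walk X Y C1 C2 = map (\<lambda>Z. (X, Y, Z, 0)) (coord_walk C1 C2)"

lemma layer0_walk_not_Nil [simp]: "layer0_walk X Y C1 C2 \<noteq> []"
  unfolding layer0_walk_def by simp

lemma hd_layer0_walk [simp]: "length C1 = length C2 \<Longrightarrow> hd (layer0_walk X Y C1 C2) = (X, Y, C1, 0)"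
  unfolding layer0_walk_def by (simp add: hd_map)

lemma last_layer0_walk [simp]: "length C1 = length C2 \<Longrightarrow> last (layer0_walk X Y C1 C2) = (X, Y, C2, 0)"
  unfolding layer0_walk_def by (simp add: last_map)

lemma distinct_layer0_walk [simp]: "distinct (layer0_walk X Y C1 C2)"
  unfolding layer0_walk_def by (simp add: distinct_map distinct_coord_walk inj_on_def)

lemma length_layer0_walk: "length (layer0_walk X Y C1 C2) \<le> length C1 + 1"
  unfolding layer0_walk_def using length_coord_walk by simp

lemma set_layer0_walk: "set (layer0_walk X Y C1 C2) = (\<lambda>Z. (X, Y, Z, 0)) ` set (coord_walk C1 C2)"
  unfolding layer0_walk_def by simp

lemma mem_layer0_walk [simp]:
  "(X', Y', Z, d) \<in> set (layer0_walk X Y C1 C2) \<longleftrightarrow>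
     X' = X \<and> Y' = Y \<and> d = 0 \<and> Z \<in> set (coord_walk C1 C2)"
  unfolding layer0_walk_def by auto

lemma layer0_walk_is_short_walk:
  assumes "tern_str r X" "tern_str s Y" "tern_str t C1" "tern_str t C2"
  shows "(\<forall>x\<in>set (layer0_walk X Y C1 C2). e3c_vert r s t x)"
    and "successively (e3c_adj r s t) (layer0_walk X Y C1 C2)"
    and "length (layer0_walk X Y C1 C2) \<le> t + 1"
proof -
  show verts: "\<forall>x\<in>set (layer0_walk X Y C1 C2). e3c_vert r s t x"
    using assms tern_str_coord_walk[OF assms(3,4)] by (auto simp: layer0_walk_def)
  have "length C1 = length C2" "length C1 = t"
    using assms(3,4) by (simp_all add: tern_str_def)
  then show "length (layer0_walk X Y C1 C2) \<le> t + 1"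
    using length_layer0_walk by metis
  from \<open>length C1 = length C2\<close> have "successively differ_one (coord_walk C1 C2)"
    by (rule successively_differ_one_coord_walk)
  then show "successively (e3c_adj r s t) (layer0_walk X Y C1 C2)"
    unfolding layer0_walk_def successively_map
    by (rule successively_mono)
      (use verts in \<open>auto simp: e3c_adj_def differ_one_imp_neq layer0_walk_def\<close>)
qed

definition has_disjoint_paths :: "nat \<Rightarrow> nat \<Rightarrow> nat \<Rightarrow> e3vert \<Rightarrow> e3vert \<Rightarrow> nat \<Rightarrow> nat \<Rightarrow> bool" where
  "has_disjoint_paths r s t u v n L \<longleftrightarrow> (\<exists>ps. length ps = n \<and> internally_disjoint u v ps \<and>
     (\<forall>p\<in>set ps. e3c_path r s t u v p \<and> path_len p \<le> L))"

lemma e3c_path_has_interior: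
  assumes "e3c_path r s t u v p" "u \<noteq> v" "\<not> e3c_adj r s t u v"
  shows "\<exists>x\<in>set p. x \<noteq> u \<and> x \<noteq> v"
proof -
  obtain p' where p: "p = u # p'"
    using assms(1) by (cases p) (auto simp: e3c_path_def)
  with assms(1,2) obtain x p'' where "p = u # x # p''"
    by (cases p') (auto simp: e3c_path_def)
  with assms show ?thesis
    by (auto simp: e3c_path_iff)
qed

lemma has_disjoint_paths_by_labels:
  fixes pth :: "'k \<Rightarrow> e3vert list" and lab :: "e3vert \<Rightarrow> 'k"
  assumes "distinct ks" "u \<noteq> v" "\<not> e3c_adj r s t u v"
    and paths: "\<And>k. k \<in> set ks \<Longrightarrow> e3c_path r s t u v (pth k) \<and> path_len (pth k) \<le> L"
    and labels: "\<And>k x. k \<in> set ks \<Longrightarrow> x \<in> set (pth k) \<Longrightarrow> x \<noteq> u \<Longrightarrow> x \<noteq> v \<Longrightarrow> lab x = k"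
  shows "has_disjoint_paths r s t u v (length ks) L"
proof -
  have "inj_on pth (set ks)"
  proof (rule inj_onI)
    fix k k' assume k: "k \<in> set ks" "k' \<in> set ks" "pth k = pth k'"
    then obtain x where "x \<in> set (pth k)" "x \<noteq> u" "x \<noteq> v"
      using e3c_path_has_interior paths assms(2,3) by blast
    then show "k = k'"
      using labels k by metis
  qed
  moreover have "set (pth (ks ! i)) \<inter> set (pth (ks ! j)) \<subseteq> {u, v}"
    if "i < length ks" "j < length ks" "i \<noteq> j" for i j
    using labels[of "ks ! i"] labels[of "ks ! j"] that assms(1) nth_eq_iff_index_eq by fastforce
  ultimately show ?thesis
    unfolding has_disjoint_paths_def internally_disjoint_def using assms(1) paths
    by (intro exI[of _ "map pth ks"]) (auto simp: distinct_map)
qed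

lemma e3c_path_rev: "e3c_path r s t u v p \<Longrightarrow> e3c_path r s t v u (rev p)"
  by (auto simp: e3c_path_iff hd_rev last_rev e3c_adj_commute)

lemma has_disjoint_paths_commute:
  assumes "has_disjoint_paths r s t u v n L"
  shows "has_disjoint_paths r s t v u n L"
proof -
  obtain ps where ps: "length ps = n" "internally_disjoint u v ps"
    "\<forall>p\<in>set ps. e3c_path r s t u v p \<and> path_len p \<le> L"
    using assms unfolding has_disjoint_paths_def by blast
  then have "internally_disjoint v u (map rev ps)"
    unfolding internally_disjoint_def by (auto simp: distinct_map inj_on_def)
  with ps show ?thesis
    unfolding has_disjoint_paths_def path_len_def
    by (intro exI[of _ "map rev ps"]) (auto intro: e3c_path_rev)
qed

fun swap_AB :: "e3vert \<Rightarrow> e3vert" where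
  "swap_AB (A, B, C, d) = (B, A, C, if d = 1 then 2 else if d = 2 then 1 else d)"

lemma swap_AB_swap_AB [simp]: "swap_AB (swap_AB x) = x"
  by (cases x) auto

lemma inj_swap_AB: "inj swap_AB"
  by (metis injI swap_AB_swap_AB)

lemma e3c_vert_swap_AB [simp]: "e3c_vert s r t (swap_AB x) \<longleftrightarrow> e3c_vert r s t x"
  by (cases x) auto

lemma e3c_adj_swap_AB [simp]: "e3c_adj s r t (swap_AB x) (swap_AB y) \<longleftrightarrow> e3c_adj r s t x y"
proof -
  obtain A B C d A' B' C' d' where xy: "x = (A, B, C, d)" "y = (A', B', C', d')"
    by (cases x, cases y)
  show ?thesis
    unfolding xy e3c_adj_def e3c_vert_def by auto
qed

lemma e3c_path_swap_AB:
  assumes "e3c_path r s t u v p"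
  shows "e3c_path s r t (swap_AB u) (swap_AB v) (map swap_AB p)"
proof -
  have "distinct (map swap_AB p)"
    using assms inj_on_subset[OF inj_swap_AB] by (simp add: e3c_path_iff distinct_map)
  with assms show ?thesis
    by (simp add: e3c_path_iff hd_map last_map successively_map)
qed

lemma has_disjoint_paths_swap_AB:
  assumes "has_disjoint_paths r s t u v n L"
  shows "has_disjoint_paths s r t (swap_AB u) (swap_AB v) n L"
proof -
  obtain ps where ps: "length ps = n" "internally_disjoint u v ps"
    "\<forall>p\<in>set ps. e3c_path r s t u v p \<and> path_len p \<le> L"
    using assms unfolding has_disjoint_paths_def by blast
  have "inj_on (map swap_AB) (set ps)"
    using inj_swap_AB by (metis inj_mapI inj_on_subset subset_UNIV)
  moreover have "set (map swap_AB p) \<inter> set (map swap_AB q) \<subseteq> {swap_AB u, swap_AB v}"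
    if "set p \<inter> set q \<subseteq> {u, v}" for p q
    using image_mono[OF that, of swap_AB] by (simp add: image_Int[OF inj_swap_AB])
  ultimately have "internally_disjoint (swap_AB u) (swap_AB v) (map (map swap_AB) ps)"
    using ps(2) unfolding internally_disjoint_def by (simp add: distinct_map)
  with ps show ?thesis
    unfolding has_disjoint_paths_def path_len_def
    by (intro exI[of _ "map (map swap_AB) ps"]) (auto intro: e3c_path_swap_AB)
qed

section \<open>The path systems\<close>

datatype route = Direct | Around | Via "nat \<times> nat"

definition routes :: "nat \<Rightarrow> route list" where
  "routes m = Direct # Around # map Via (shift_indices m)"

lemma length_routes: "length (routes m) = 2 * m + 2"
  unfolding routes_def by simp

lemma distinct_routes: "distinct (routes m)"
  unfolding routes_def by (auto simp: distinct_map distinct_shift_indices inj_on_def)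

lemma Via_in_routes: "Via k \<in> set (routes m) \<longleftrightarrow> k \<in> set (shift_indices m)"
  unfolding routes_def by auto

locale e3c_pair =
  fixes r s t :: nat and A B C C' :: "nat list"
  assumes tern_A: "tern_str r A" and tern_B: "tern_str s B"
    and tern_C: "tern_str t C" and tern_C': "tern_str t C'"
    and C_neq: "C \<noteq> C'"
begin

lemma length_C: "length C = t" "length C' = t"
  using tern_C tern_C' by (auto simp: tern_str_def)

lemma ends_in_coord_walk: "C \<in> set (coord_walk C C')" "C' \<in> set (coord_walk C C')"
  using hd_in_set[OF coord_walk_not_Nil] last_in_set[OF coord_walk_not_Nil] length_C
  by (metis hd_coord_walk, metis last_coord_walk)

lemmas pair_facts = tern_A tern_B tern_C tern_C' length_C C_neq C_neq[symmetric] ends_in_coord_walk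

lemmas path_check_simps =
  Let_def e3c_path_iff path_len_def successively_append_iff successively_Cons hd_append

text \<open>The parameter k0 stands for the only shift of C that may lie on the walk from C to C':
  the path \<open>Via k0\<close> reaches its column through (A, B, C, 2) instead of through shift C k0.\<close>
definition path_02 :: "nat \<times> nat \<Rightarrow> route \<Rightarrow> e3vert list" where
  "path_02 k0 \<rho> = (let u = (A, B, C, 0); v = (A, B, C', 2); B1 = shift B (0, 1) in
     case \<rho> of
       Direct \<Rightarrow> layer0_walk A B C C' @ [v]
     | Around \<Rightarrow> [u, (A, B, C, 1), (A, B1, C, 1)] @ layer0_walk A B1 C C' @
         [(A, B1, C', 1), (A, B, C', 1), v]
     | Via k \<Rightarrow> if k = k0
         then [u, (A, B, C, 2), (shift A k, B, C, 2)] @ layer0_walk (shift A k) B C C' @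
           [(shift A k, B, C', 2), v]
         else [u, (A, B, shift C k, 0), (A, B, shift C k, 2), (shift A k, B, shift C k, 2)] @
           layer0_walk (shift A k) B (shift C k) C' @ [(shift A k, B, C', 2), v])"

definition route_02 :: "nat \<times> nat \<Rightarrow> e3vert \<Rightarrow> route" where
  "route_02 k0 x = (case x of (X, Y, Z, d) \<Rightarrow>
     if Y \<noteq> B \<or> d = 1 then Around
     else if X \<noteq> A then Via (shift_index A X)
     else if d = 2 \<and> Z = C then Via k0
     else if d = 0 \<and> Z \<in> set (coord_walk C C') then Direct
     else Via (shift_index C Z))"

context
  fixes m :: nat and k0 :: "nat \<times> nat"
  assumes m_le: "m \<le> r" "m \<le> t" and s_pos: "0 < s"
    and off_walk:
      "\<And>k. k \<in> set (shift_indices t) \<Longrightarrow> shift C k \<in> set (coord_walk C C') \<Longrightarrow> k = k0"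
begin

lemma zero_one_shift_B: "(0, 1) \<in> set (shift_indices s)"
  using s_pos by simp

lemma Via_in_routes_02:
  assumes "Via k \<in> set (routes m)"
  shows "k \<in> set (shift_indices r)" "k \<in> set (shift_indices t)"
    and "k \<noteq> k0 \<Longrightarrow> shift C k \<notin> set (coord_walk C C')"
proof -
  show k: "k \<in> set (shift_indices r)" "k \<in> set (shift_indices t)"
    using assms m_le shift_indices_mono unfolding Via_in_routes by blast+
  show "k \<noteq> k0 \<Longrightarrow> shift C k \<notin> set (coord_walk C C')"
    using off_walk[OF k(2)] by blast
qed

lemma path_02_is_short_path:
  assumes "\<rho> \<in> set (routes m)"
  shows "e3c_path r s t (A, B, C, 0) (A, B, C', 2) (path_02 k0 \<rho>) \<and>
    path_len (path_02 k0 \<rho>) \<le> t + 6"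
proof (cases \<rho>)
  case Direct
  then show ?thesis
    using layer0_walk_is_short_walk[of r A s B t C C'] pair_facts
    by (simp add: path_02_def path_check_simps)
next
  case Around
  then show ?thesis
    using layer0_walk_is_short_walk[of r A s "shift B (0, 1)" t C C']
      shift_facts[OF tern_B zero_one_shift_B] pair_facts
    by (simp add: path_02_def path_check_simps)
next
  case (Via k)
  note k = Via_in_routes_02[OF assms[unfolded Via]]
  have "k \<noteq> k0 \<Longrightarrow> shift C k \<noteq> C'"
    using k(3) ends_in_coord_walk by blast
  then show ?thesis
    using layer0_walk_is_short_walk[of r "shift A k" s B t C C']
      layer0_walk_is_short_walk[of r "shift A k" s B t "shift C k" C']
      shift_facts[OF tern_A k(1)] shift_facts[OF tern_C k(2)] pair_facts Via
    by (cases "k = k0") (simp_all add: path_02_def path_check_simps)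
qed

lemma route_02_path_02:
  assumes "\<rho> \<in> set (routes m)" "x \<in> set (path_02 k0 \<rho>)" "x \<notin> {(A, B, C, 0), (A, B, C', 2)}"
  shows "route_02 k0 x = \<rho>"
proof (cases \<rho>)
  case (Via k)
  note k = Via_in_routes_02[OF assms(1)[unfolded Via]]
  with assms Via shift_facts[OF tern_A k(1)] shift_facts[OF tern_C k(2)] show ?thesis
    by (cases "k = k0") (auto simp: path_02_def Let_def route_02_def set_layer0_walk)
qed (use assms shift_facts[OF tern_B zero_one_shift_B]
    in \<open>auto simp: path_02_def Let_def route_02_def set_layer0_walk\<close>)

end

lemma has_paths_02:
  assumes "m \<le> r" "m \<le> t" "0 < s"
  shows "has_disjoint_paths r s t (A, B, C, 0) (A, B, C', 2) (2 * m + 2) (t + 6)"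
proof -
  obtain k0 where off_walk:
    "\<And>k. k \<in> set (shift_indices t) \<Longrightarrow> shift C k \<in> set (coord_walk C C') \<Longrightarrow> k = k0"
    using coord_walk_contains_at_most_one_shift[OF tern_C length_C(2)] by blast
  have "has_disjoint_paths r s t (A, B, C, 0) (A, B, C', 2) (length (routes m)) (t + 6)"
    by (rule has_disjoint_paths_by_labels[where pth = "path_02 k0" and lab = "route_02 k0"])
      (use distinct_routes C_neq path_02_is_short_path[OF assms off_walk]
          route_02_path_02[OF assms off_walk] in \<open>auto simp: e3c_adj_def\<close>)
  then show ?thesis
    by (simp add: length_routes)
qed

definition path_12 :: "route \<Rightarrow> e3vert list" where
  "path_12 \<rho> = (let u = (A, B, C, 1); v = (A, B, C', 2); A1 = shift A (0, 1) in
     case \<rho> of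
       Direct \<Rightarrow> u # layer0_walk A B C C' @ [v]
     | Around \<Rightarrow> [u, (A, B, C, 2), (A1, B, C, 2)] @ layer0_walk A1 B C C' @ [(A1, B, C', 2), v]
     | Via k \<Rightarrow> [u, (A, shift B k, C, 1)] @ layer0_walk A (shift B k) C C' @
         (if k = (0, 1) then [(A, shift B k, C', 1), (A, B, C', 1), v]
          else [(A, shift B k, C', 2), (shift A k, shift B k, C', 2), (shift A k, shift B k, C', 1),
            (shift A k, B, C', 1), (shift A k, B, C', 2), v]))"

definition route_12 :: "e3vert \<Rightarrow> route" where
  "route_12 x = (case x of (X, Y, Z, d) \<Rightarrow>
     if Y \<noteq> B then Via (shift_index B Y)
     else if X = A then (if d = 0 then Direct else if d = 2 then Around else Via (0, 1))
     else if X = shift A (0, 1) then Around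
     else Via (shift_index A X))"

context
  fixes m :: nat
  assumes m_le: "m \<le> r" "m \<le> s" and r_pos: "0 < r"
begin

lemma zero_one_shift_A: "(0, 1) \<in> set (shift_indices r)"
  using r_pos by simp

lemma Via_in_routes_12:
  assumes "Via k \<in> set (routes m)"
  shows "k \<in> set (shift_indices r)" "k \<in> set (shift_indices s)"
    and "k \<noteq> (0, 1) \<Longrightarrow> shift A k \<noteq> shift A (0, 1)"
proof -
  show k: "k \<in> set (shift_indices r)" "k \<in> set (shift_indices s)"
    using assms m_le shift_indices_mono unfolding Via_in_routes by blast+
  show "k \<noteq> (0, 1) \<Longrightarrow> shift A k \<noteq> shift A (0, 1)"
    using shift_facts(6)[OF tern_A k(1)] shift_facts(6)[OF tern_A zero_one_shift_A] by metis
qed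

lemma path_12_is_short_path:
  assumes "\<rho> \<in> set (routes m)"
  shows "e3c_path r s t (A, B, C, 1) (A, B, C', 2) (path_12 \<rho>) \<and>
    path_len (path_12 \<rho>) \<le> t + 8"
proof (cases \<rho>)
  case Direct
  then show ?thesis
    using layer0_walk_is_short_walk[of r A s B t C C'] pair_facts
    by (simp add: path_12_def path_check_simps)
next
  case Around
  then show ?thesis
    using layer0_walk_is_short_walk[of r "shift A (0, 1)" s B t C C']
      shift_facts[OF tern_A zero_one_shift_A] pair_facts
    by (simp add: path_12_def path_check_simps)
next
  case (Via k)
  note k = Via_in_routes_12[OF assms[unfolded Via]]
  then show ?thesis
    using layer0_walk_is_short_walk[of r A s "shift B k" t C C'] shift_facts[OF tern_A k(1)]
      shift_facts[OF tern_B k(2)] pair_facts Via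
    by (cases "k = (0, 1)") (simp_all add: path_12_def path_check_simps)
qed

lemma route_12_path_12:
  assumes "\<rho> \<in> set (routes m)" "x \<in> set (path_12 \<rho>)" "x \<notin> {(A, B, C, 1), (A, B, C', 2)}"
  shows "route_12 x = \<rho>"
proof (cases \<rho>)
  case (Via k)
  note k = Via_in_routes_12[OF assms(1)[unfolded Via]]
  with assms Via shift_facts[OF tern_A k(1)] shift_facts[OF tern_B k(2)] show ?thesis
    by (cases "k = (0, 1)") (auto simp: path_12_def Let_def route_12_def set_layer0_walk)
qed (use assms shift_facts[OF tern_A zero_one_shift_A]
    in \<open>auto simp: path_12_def Let_def route_12_def set_layer0_walk\<close>)

end

lemma has_paths_12:
  assumes "m \<le> r" "m \<le> s" "0 < r"
  shows "has_disjoint_paths r s t (A, B, C, 1) (A, B, C', 2) (2 * m + 2) (t + 8)"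
proof -
  have "has_disjoint_paths r s t (A, B, C, 1) (A, B, C', 2) (length (routes m)) (t + 8)"
    by (rule has_disjoint_paths_by_labels[where pth = path_12 and lab = route_12])
      (use distinct_routes C_neq path_12_is_short_path[OF assms] route_12_path_12[OF assms]
        in \<open>auto simp: e3c_adj_def\<close>)
  then show ?thesis
    by (simp add: length_routes)
qed

lemma has_paths_01:
  assumes "m \<le> s" "m \<le> t" "0 < r"
  shows "has_disjoint_paths r s t (A, B, C, 0) (A, B, C', 1) (2 * m + 2) (t + 6)"
proof -
  interpret swapped: e3c_pair s r t B A C C'
    using pair_facts by unfold_locales
  have "has_disjoint_paths s r t (B, A, C, 0) (B, A, C', 2) (2 * m + 2) (t + 6)"
    using assms by (rule swapped.has_paths_02)
  from has_disjoint_paths_swap_AB[OF this] show ?thesis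
    by simp
qed

end

theorem lemma15:
  fixes r s t :: nat and A B C C' :: "nat list" and d d' :: nat
  assumes "1 \<le> r" and "r \<le> s" and "s \<le> t"
    and "e3c_vert r s t (A, B, C, d)" and "e3c_vert r s t (A, B, C', d')"
    and "C \<noteq> C'" and "d \<noteq> d'"
  shows "\<exists>ps :: e3vert list list. length ps = 2 * r + 2 \<and>
           internally_disjoint (A, B, C, d) (A, B, C', d') ps \<and>
           (\<forall>p\<in>set ps. e3c_path r s t (A, B, C, d) (A, B, C', d') p \<and>
              path_len p \<le> (if {d, d'} = {1, 2} then t + 8 else t + 6))"
proof -
  have key: "has_disjoint_paths r s t (A, B, X, e) (A, B, Y, e') (2 * r + 2)
      (if {e, e'} = {1, 2} then t + 8 else t + 6)"
    if layers: "e < e'" "e' < 3" and "tern_str t X" "tern_str t Y" "X \<noteq> Y" for X Y e e'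
  proof -
    interpret e3c_pair r s t A B X Y
      using assms(4) that(3-5) by unfold_locales auto
    consider "e = 0" "e' = 1" | "e = 0" "e' = 2" | "e = 1" "e' = 2"
      using layers by linarith
    then show ?thesis
      using has_paths_01[of r] has_paths_02[of r] has_paths_12[of r] assms(1-3)
      by cases (simp_all add: doubleton_eq_iff)
  qed
  have "has_disjoint_paths r s t (A, B, C, d) (A, B, C', d') (2 * r + 2)
      (if {d, d'} = {1, 2} then t + 8 else t + 6)"
  proof (cases "d < d'")
    case True
    with key assms(4-6) show ?thesis by simp
  next
    case False
    with key[of d' d C' C] assms(4-7) show ?thesis
      by (simp add: insert_commute has_disjoint_paths_commute)
  qed
  then show ?thesis
    unfolding has_disjoint_paths_def .
qed

end
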